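(* There is at most one limit on $BM(\infty)$: if $L'$ and $L''$ are mappings $BM(\infty)\to\mathbb{R}$, each satisfying (1) if $f(x)=c$ for every $x$ then the value at $f$ is $c$, and (2) whenever $f,g\in BM(\infty)$ and the value at $f$ is strictly less than the value at $g$, there exists $a$ with $f(x)<g(x)$ for all $x>a$, then $L'(f)=L''(f)$ for every $f\in BM(\infty)$.
   Context: All functions are real-valued functions of a real variable. $BM(\infty)$ is the class of functions $f$ for which there exists $x_0$ such that $f$ is defined, bounded and monotone on the interval $(x_0,\infty)$. *)

theory Defs
  imports Complex_Main
begin

text \<open>BM at infinity: functions that are bounded and monotone on some
  interval (x0, infinity).  Functions are total in HOL, so being defined
  there is automatic.\<close>
definition BM_infty :: "(real \<Rightarrow> real) set" where
  "BM_infty = {f. \<exists>x0. (\<exists>B. \<forall>x>x0. \<bar>f x\<bar> \<le> B) \<and>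
      (mono_on {x0<..} f \<or> antimono_on {x0<..} f)}"

end

theory Submission
  imports Defs
begin

text \<open>If one limit gave \<open>f\<close> a smaller value than the other, a constant \<open>c\<close> strictly between
  the two values would lie eventually above \<open>f\<close> by the order property of the first limit
  and eventually below \<open>f\<close> by that of the second, which is impossible.\<close>

lemma const_in_BM_infty: "(\<lambda>x. c) \<in> BM_infty"
  unfolding BM_infty_def by (auto intro!: exI[of _ 0] exI[of _ "\<bar>c\<bar>"] simp: mono_on_def)

lemma limit_le_limit:
  fixes L1 L2 :: "(real \<Rightarrow> real) \<Rightarrow> real"
  assumes L1_const: "\<And>c. L1 (\<lambda>x. c) = c"
    and L1_order: "\<And>f g. f \<in> BM_infty \<Longrightarrow> g \<in> BM_infty \<Longrightarrow> L1 f < L1 g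
                      \<Longrightarrow> \<exists>a. \<forall>x>a. f x < g x"
    and L2_const: "\<And>c. L2 (\<lambda>x. c) = c"
    and L2_order: "\<And>f g. f \<in> BM_infty \<Longrightarrow> g \<in> BM_infty \<Longrightarrow> L2 f < L2 g
                      \<Longrightarrow> \<exists>a. \<forall>x>a. f x < g x"
    and f: "f \<in> BM_infty"
  shows "L2 f \<le> L1 f"
proof (rule ccontr)
  assume "\<not> L2 f \<le> L1 f"
  then have less: "L1 f < L2 f" by simp
  define c where "c = (L1 f + L2 f) / 2"
  have "L1 f < L1 (\<lambda>x. c)" using less by (simp add: L1_const c_def)
  then obtain a where below: "\<forall>x>a. f x < c" using L1_order[OF f const_in_BM_infty] by auto
  have "L2 (\<lambda>x. c) < L2 f" using less by (simp add: L2_const c_def)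
  then obtain b where above: "\<forall>x>b. c < f x" using L2_order[OF const_in_BM_infty f] by auto
  have "f (max a b + 1) < c" "c < f (max a b + 1)" using below above by auto
  then show False by simp
qed

theorem mainTheorem2:
  fixes L1 L2 :: "(real \<Rightarrow> real) \<Rightarrow> real"
  assumes L1_const: "\<And>c. L1 (\<lambda>x. c) = c"
    and L1_order: "\<And>f g. f \<in> BM_infty \<Longrightarrow> g \<in> BM_infty \<Longrightarrow> L1 f < L1 g
                      \<Longrightarrow> \<exists>a. \<forall>x>a. f x < g x"
    and L2_const: "\<And>c. L2 (\<lambda>x. c) = c"
    and L2_order: "\<And>f g. f \<in> BM_infty \<Longrightarrow> g \<in> BM_infty \<Longrightarrow> L2 f < L2 g
                      \<Longrightarrow> \<exists>a. \<forall>x>a. f x < g x"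
  shows "\<forall>f\<in>BM_infty. L1 f = L2 f"
proof
  fix f assume f: "f \<in> BM_infty"
  have "L2 f \<le> L1 f" by (rule limit_le_limit[OF assms f])
  moreover have "L1 f \<le> L2 f" by (rule limit_le_limit[OF L2_const L2_order L1_const L1_order f])
  ultimately show "L1 f = L2 f" by simp
qed

end
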